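(* If $X$ is a Cayley graph on a finite abelian group with $X\cong K_3\,\square\,K_3\,\square\,K_2$, then $\mathcal H(X)=\mathcal E(X)$.
   Context: $\square$ denotes the Cartesian product of graphs; $K_n$ is the complete graph on $n$ vertices. For a Cayley graph $X=\mathrm{Cay}(G;S)$ (vertex set $G$, edges $\{g,gs\}$), a flow is $f:G\times S\to\mathbb Z$ with $f(v,s)=-f(vs,s^{-1})$ and $\sum_sf(v,s)=0$; $\mathcal E(X)$ is the group of flows whose edge-flows (one orientation per edge) have even sum; oriented cycles are identified with flows ($1$ on their oriented edges, $-1$ on reversals); $\mathcal H(X)$ is the subgroup generated by oriented hamiltonian cycles. *)

theory Defs
  imports Main
begin

type_synonym 'v sgraph = "'v set \<times> ('v \<Rightarrow> 'v \<Rightarrow> bool)"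

definition complete_graph :: "nat \<Rightarrow> nat sgraph" where
  "complete_graph n = ({..<n}, \<lambda>x y. x \<noteq> y)"

definition cart_prod_graph :: "'a sgraph \<Rightarrow> 'b sgraph \<Rightarrow> ('a \<times> 'b) sgraph" where
  "cart_prod_graph G H =
     (fst G \<times> fst H,
      \<lambda>(x1, y1) (x2, y2). (snd G x1 x2 \<and> y1 = y2) \<or> (x1 = x2 \<and> snd H y1 y2))"

definition graph_iso :: "'a sgraph \<Rightarrow> 'b sgraph \<Rightarrow> bool" where
  "graph_iso G H \<longleftrightarrow> (\<exists>\<phi>. bij_betw \<phi> (fst G) (fst H) \<and>
      (\<forall>x\<in>fst G. \<forall>y\<in>fst G. snd G x y \<longleftrightarrow> snd H (\<phi> x) (\<phi> y)))"

definition cayley_graph :: "'a::ab_group_add set \<Rightarrow> 'a sgraph" where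
  "cayley_graph S = (UNIV, \<lambda>g h. h - g \<in> S)"

definition cayley_edges :: "'a::ab_group_add set \<Rightarrow> 'a set set" where
  "cayley_edges S = {{g, g + s} | g s. s \<in> S}"

text \<open>Flows f : G \<times> S \<rightarrow> Z, represented as f v s (and 0 for s not in S).\<close>
definition is_flow :: "'a::ab_group_add set \<Rightarrow> ('a \<Rightarrow> 'a \<Rightarrow> int) \<Rightarrow> bool" where
  "is_flow S f \<longleftrightarrow> (\<forall>v s. s \<notin> S \<longrightarrow> f v s = 0)
     \<and> (\<forall>v. \<forall>s\<in>S. f v s = - f (v + s) (- s))
     \<and> (\<forall>v. (\<Sum>s\<in>S. f v s) = 0)"

text \<open>Flow on an edge, with respect to a (chosen) orientation of the edge.\<close>
definition edge_flow :: "'a::ab_group_add set \<Rightarrow> ('a \<Rightarrow> 'a \<Rightarrow> int) \<Rightarrow> 'a set \<Rightarrow> int" where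
  "edge_flow S f e =
     (let p = (SOME p. e = {fst p, snd p} \<and> snd p - fst p \<in> S) in f (fst p) (snd p - fst p))"

definition E_flows :: "'a::ab_group_add set \<Rightarrow> ('a \<Rightarrow> 'a \<Rightarrow> int) set" where
  "E_flows S = {f. is_flow S f \<and> even (\<Sum>e\<in>cayley_edges S. edge_flow S f e)}"

definition ham_cycle :: "'a::{ab_group_add,finite} set \<Rightarrow> 'a list \<Rightarrow> bool" where
  "ham_cycle S vs \<longleftrightarrow> distinct vs \<and> set vs = UNIV \<and> length vs \<ge> 3 \<and>
     (\<forall>i < length vs. vs ! ((i + 1) mod length vs) - vs ! i \<in> S)"

definition cycle_flow :: "'a::ab_group_add list \<Rightarrow> 'a \<Rightarrow> 'a \<Rightarrow> int" where
  "cycle_flow vs = (\<lambda>v s.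
     if \<exists>i < length vs. v = vs ! i \<and> s = vs ! ((i + 1) mod length vs) - v then 1
     else if \<exists>i < length vs. v = vs ! ((i + 1) mod length vs) \<and> s = vs ! i - v then -1
     else 0)"

inductive_set int_span :: "('a \<Rightarrow> 'b \<Rightarrow> int) set \<Rightarrow> ('a \<Rightarrow> 'b \<Rightarrow> int) set"
  for C where
  zero: "(\<lambda>v s. 0) \<in> int_span C"
| gen: "c \<in> C \<Longrightarrow> c \<in> int_span C"
| add: "f \<in> int_span C \<Longrightarrow> g \<in> int_span C \<Longrightarrow> (\<lambda>v s. f v s + g v s) \<in> int_span C"
| neg: "f \<in> int_span C \<Longrightarrow> (\<lambda>v s. - f v s) \<in> int_span C"

definition H_flows :: "'a::{ab_group_add,finite} set \<Rightarrow> ('a \<Rightarrow> 'a \<Rightarrow> int) set" where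
  "H_flows S = int_span {cycle_flow vs | vs. ham_cycle S vs}"

end

theory Submission
  imports Defs
begin

text \<open>
  A labelling of the group by the vertices \<open>0, \<dots>, 17\<close> of the concrete graph
  \<open>K\<^sub>3 \<box> K\<^sub>3 \<box> K\<^sub>2\<close> turns integer flows of \<open>X\<close> into antisymmetric, conservative
  functions on ordered pairs of adjacent vertices, and Hamiltonian cycles of the concrete
  graph into Hamiltonian cycles of \<open>X\<close>.

  \<open>\<H>(X) \<subseteq> \<E>(X)\<close>: the flow of a Hamiltonian cycle is \<open>\<plusminus>1\<close> on its 18 edges and \<open>0\<close>
  elsewhere, so its edge sum is even.

  \<open>\<E>(X) \<subseteq> \<H>(X)\<close>: we exhibit 28 Hamiltonian cycles of the concrete graph forming a basis
  of the lattice of flows with even edge sum. Write \<open>x\<close> for the vector of edge values of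
  a flow \<open>F\<close>, followed by half of its edge sum. The coefficient of each cycle is an explicit
  integer linear form in \<open>x\<close>, and for every edge the resulting combination of cycles differs
  from the coordinate of that edge by an integer combination of the linear forms that vanish
  on \<open>x\<close>: the conservation law at each vertex and the parity relation.
\<close>

section \<open>Successors along a cyclic list\<close>

definition cyclic_succ :: "'v list \<Rightarrow> 'v \<Rightarrow> 'v \<Rightarrow> bool" where
  "cyclic_succ vs v w \<longleftrightarrow> (v, w) \<in> set (zip vs (rotate1 vs))"

definition cyclic_flow :: "'v list \<Rightarrow> 'v \<Rightarrow> 'v \<Rightarrow> int" where
  "cyclic_flow vs v w = (if cyclic_succ vs v w then 1 else if cyclic_succ vs w v then -1 else 0)"

lemma cyclic_succ_nth:
  "cyclic_succ vs v w \<longleftrightarrow> (\<exists>i<length vs. v = vs ! i \<and> w = vs ! (Suc i mod length vs))"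
  unfolding cyclic_succ_def in_set_zip by (auto simp: nth_rotate1)

lemma cyclic_succ_exists_right: "v \<in> set vs \<Longrightarrow> \<exists>w. cyclic_succ vs v w"
  unfolding cyclic_succ_def by (metis in_set_impl_in_set_zip1 length_rotate1)

lemma cyclic_succ_exists_left: "w \<in> set vs \<Longrightarrow> \<exists>v. cyclic_succ vs v w"
  unfolding cyclic_succ_def by (metis in_set_impl_in_set_zip2 length_rotate1 set_rotate1)

lemma cyclic_succ_unique_right:
  "distinct vs \<Longrightarrow> cyclic_succ vs v w \<Longrightarrow> cyclic_succ vs v w' \<Longrightarrow> w = w'"
  unfolding cyclic_succ_def in_set_zip by clarsimp (metis nth_eq_iff_index_eq)

lemma cyclic_succ_unique_left:
  "distinct vs \<Longrightarrow> cyclic_succ vs v w \<Longrightarrow> cyclic_succ vs v' w \<Longrightarrow> v = v'"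
  unfolding cyclic_succ_def in_set_zip by clarsimp (metis distinct1_rotate length_rotate1 nth_eq_iff_index_eq)

lemma cyclic_succ_asym:
  assumes "distinct vs" "3 \<le> length vs" "cyclic_succ vs v w"
  shows "\<not> cyclic_succ vs w v"
proof
  assume "cyclic_succ vs w v"
  let ?n = "length vs"
  obtain i where i: "i < ?n" "v = vs ! i" "w = vs ! (Suc i mod ?n)"
    using assms(3) by (auto simp: cyclic_succ_nth)
  obtain j where j: "j < ?n" "w = vs ! j" "v = vs ! (Suc j mod ?n)"
    using \<open>cyclic_succ vs w v\<close> by (auto simp: cyclic_succ_nth)
  have "j = Suc i mod ?n" "i = Suc j mod ?n"
    using i j assms(1) by (metis mod_less_divisor nth_eq_iff_index_eq zero_less_iff_neq_zero not_less0)+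
  then show False
    using i(1) j(1) assms(2) by (auto simp: mod_Suc split: if_splits)
qed

lemma cyclic_flow_antisym:
  "distinct vs \<Longrightarrow> 3 \<le> length vs \<Longrightarrow> cyclic_flow vs w v = - cyclic_flow vs v w"
  unfolding cyclic_flow_def using cyclic_succ_asym[of vs v w] cyclic_succ_asym[of vs w v] by auto

lemma cyclic_succ_map:
  assumes "inj_on f (insert v (insert w (set vs)))"
  shows "cyclic_succ (map f vs) (f v) (f w) \<longleftrightarrow> cyclic_succ vs v w"
proof -
  have "(f v, f w) \<in> map_prod f f ` set (zip vs (rotate1 vs)) \<longleftrightarrow> (v, w) \<in> set (zip vs (rotate1 vs))"
  proof
    assume "(f v, f w) \<in> map_prod f f ` set (zip vs (rotate1 vs))"
    then obtain x y where xy: "(x, y) \<in> set (zip vs (rotate1 vs))" "f x = f v" "f y = f w"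
      by auto
    then have "x \<in> set vs" "y \<in> set vs"
      by (auto dest: set_zip_leftD set_zip_rightD)
    then have "x = v" "y = w"
      using xy(2,3) inj_onD[OF assms] by auto
    then show "(v, w) \<in> set (zip vs (rotate1 vs))" using xy(1) by simp
  qed auto
  then show ?thesis
    unfolding cyclic_succ_def rotate1_map zip_map_map by (simp add: map_prod_def case_prod_beta)
qed

lemma cycle_flow_eq_cyclic_flow:
  fixes vs :: "'a::ab_group_add list"
  shows "cycle_flow vs v s = cyclic_flow vs v (v + s)"
proof -
  have diff_iff: "s = a - v \<longleftrightarrow> v + s = a" for a by (auto simp: algebra_simps)
  have "(\<exists>i<length vs. v = vs ! i \<and> s = vs ! ((i + 1) mod length vs) - v) \<longleftrightarrow> cyclic_succ vs v (v + s)"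
    unfolding cyclic_succ_nth diff_iff by auto
  moreover have "(\<exists>i<length vs. v = vs ! ((i + 1) mod length vs) \<and> s = vs ! i - v) \<longleftrightarrow> cyclic_succ vs (v + s) v"
    unfolding cyclic_succ_nth diff_iff by auto
  ultimately show ?thesis
    unfolding cycle_flow_def cyclic_flow_def by presburger
qed

definition cycle_edges :: "'v list \<Rightarrow> 'v set set" where
  "cycle_edges vs = (\<lambda>(v, w). {v, w}) ` set (zip vs (rotate1 vs))"

lemma doubleton_in_cycle_edges:
  "{v, w} \<in> cycle_edges vs \<longleftrightarrow> cyclic_succ vs v w \<or> cyclic_succ vs w v"
  unfolding cycle_edges_def cyclic_succ_def by (auto simp: doubleton_eq_iff)

lemma card_cycle_edges:
  assumes "distinct vs" "3 \<le> length vs"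
  shows "card (cycle_edges vs) = length vs"
proof -
  have "inj_on (\<lambda>(v, w). {v, w}) (set (zip vs (rotate1 vs)))"
  proof (rule inj_onI, clarify)
    fix v w v' w'
    assume "(v, w) \<in> set (zip vs (rotate1 vs))" "(v', w') \<in> set (zip vs (rotate1 vs))"
      and "{v, w} = {v', w'}"
    then show "v = v' \<and> w = w'"
      using cyclic_succ_asym[OF assms] unfolding cyclic_succ_def
      by (auto simp: doubleton_eq_iff)
  qed
  then show ?thesis
    unfolding cycle_edges_def by (simp add: card_image distinct_card distinct_zipI1 assms(1))
qed

section \<open>Flows of Hamiltonian cycles\<close>

lemma ham_cycle_succ_diff: "ham_cycle S vs \<Longrightarrow> cyclic_succ vs v w \<Longrightarrow> w - v \<in> S"
  unfolding ham_cycle_def cyclic_succ_nth by auto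

lemma cycle_flow_conservation:
  fixes S :: "'a::{ab_group_add,finite} set"
  assumes ham: "ham_cycle S vs" and sym: "\<forall>s\<in>S. - s \<in> S"
  shows "(\<Sum>s\<in>S. cycle_flow vs v s) = 0"
proof -
  have dist: "distinct vs" and len: "3 \<le> length vs" and all: "set vs = UNIV"
    using ham by (auto simp: ham_cycle_def)
  obtain w where w: "cyclic_succ vs v w" using cyclic_succ_exists_right all by (metis UNIV_I)
  obtain u where u: "cyclic_succ vs u v" using cyclic_succ_exists_left all by (metis UNIV_I)
  have "cyclic_succ vs v (v + s) \<longleftrightarrow> s = w - v" for s
    using cyclic_succ_unique_right[OF dist w, of "v + s"] w by (auto simp: algebra_simps)
  then have succ: "{s\<in>S. cyclic_succ vs v (v + s)} = {w - v}"
    using ham_cycle_succ_diff[OF ham w] by auto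
  have "- (v - u) \<in> S"
    using sym ham_cycle_succ_diff[OF ham u] by blast
  moreover have "cyclic_succ vs (v + s) v \<longleftrightarrow> s = u - v" for s
    using cyclic_succ_unique_left[OF dist u, of "v + s"] u by (auto simp: algebra_simps)
  ultimately have pred: "{s\<in>S. cyclic_succ vs (v + s) v} = {u - v}"
    by auto
  have "(\<Sum>s\<in>S. cycle_flow vs v s)
      = (\<Sum>s\<in>S. (if cyclic_succ vs v (v + s) then 1 else 0) - (if cyclic_succ vs (v + s) v then 1 else 0))"
    using cyclic_succ_asym[OF dist len]
    by (intro sum.cong) (auto simp: cycle_flow_eq_cyclic_flow cyclic_flow_def)
  also have "\<dots> = int (card {s\<in>S. cyclic_succ vs v (v + s)}) - int (card {s\<in>S. cyclic_succ vs (v + s) v})"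
    by (simp add: sum_subtractf sum.inter_filter[symmetric])
  also have "\<dots> = 0" unfolding succ pred by simp
  finally show ?thesis .
qed

lemma is_flow_cycle_flow:
  fixes S :: "'a::{ab_group_add,finite} set"
  assumes ham: "ham_cycle S vs" and sym: "\<forall>s\<in>S. - s \<in> S"
  shows "is_flow S (cycle_flow vs)"
proof -
  have dist: "distinct vs" and len: "3 \<le> length vs"
    using ham by (auto simp: ham_cycle_def)
  have "cycle_flow vs v s = 0" if "s \<notin> S" for v s
  proof -
    have "\<not> cyclic_succ vs v (v + s)"
      using ham_cycle_succ_diff[OF ham, of v "v + s"] that by auto
    moreover have "\<not> cyclic_succ vs (v + s) v"
    proof
      assume "cyclic_succ vs (v + s) v"
      then have "v - (v + s) \<in> S" using ham_cycle_succ_diff[OF ham] by blast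
      then have "- s \<in> S" by simp
      then have "- (- s) \<in> S" using sym by blast
      then show False using that by simp
    qed
    ultimately show ?thesis by (simp add: cycle_flow_eq_cyclic_flow cyclic_flow_def)
  qed
  moreover have "cycle_flow vs v s = - cycle_flow vs (v + s) (- s)" for v s
    using cyclic_flow_antisym[OF dist len, of v "v + s"] by (simp add: cycle_flow_eq_cyclic_flow)
  ultimately show ?thesis
    unfolding is_flow_def using cycle_flow_conservation[OF ham sym] by blast
qed

lemma edge_flow_obtain:
  assumes "e \<in> cayley_edges S"
  obtains v w where "e = {v, w}" "w - v \<in> S" "\<And>f. edge_flow S f e = f v (w - v)"
proof -
  let ?P = "\<lambda>p. e = {fst p, snd p} \<and> snd p - fst p \<in> S"
  obtain g s where "e = {g, g + s}" "s \<in> S" using assms by (auto simp: cayley_edges_def)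
  then have "?P (g, g + s)" by simp
  then have "?P (SOME p. ?P p)" by (rule someI)
  then show ?thesis using that unfolding edge_flow_def Let_def by blast
qed

lemma even_edge_sum_cycle_flow:
  fixes S :: "'a::{ab_group_add,finite} set"
  assumes ham: "ham_cycle S vs" and even_len: "even (length vs)"
  shows "even (\<Sum>e\<in>cayley_edges S. edge_flow S (cycle_flow vs) e)"
proof -
  have dist: "distinct vs" and len: "3 \<le> length vs" using ham by (auto simp: ham_cycle_def)
  have "odd (edge_flow S (cycle_flow vs) e) \<longleftrightarrow> e \<in> cycle_edges vs" if e: "e \<in> cayley_edges S" for e
  proof -
    obtain v w where "e = {v, w}" and "\<And>f. edge_flow S f e = f v (w - v)"
      using edge_flow_obtain[OF e] by metis
    then show ?thesis
      by (auto simp: cycle_flow_eq_cyclic_flow cyclic_flow_def doubleton_in_cycle_edges)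
  qed
  moreover have "cycle_edges vs \<subseteq> cayley_edges S"
  proof
    fix e assume "e \<in> cycle_edges vs"
    then obtain v w where "cyclic_succ vs v w" "e = {v, v + (w - v)}"
      unfolding cycle_edges_def cyclic_succ_def by auto
    then show "e \<in> cayley_edges S"
      using ham_cycle_succ_diff[OF ham] unfolding cayley_edges_def by blast
  qed
  ultimately have "{e\<in>cayley_edges S. odd (edge_flow S (cycle_flow vs) e)} = cycle_edges vs"
    by blast
  then show ?thesis
    using even_len card_cycle_edges[OF dist len] by (simp add: even_sum_iff)
qed

lemma is_flow_add:
  assumes f: "is_flow S f" and g: "is_flow S g"
  shows "is_flow S (\<lambda>v s. f v s + g v s)"
  unfolding is_flow_def
proof (intro conjI allI ballI impI)
  fix v s
  show "s \<notin> S \<Longrightarrow> f v s + g v s = 0"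
    using f g unfolding is_flow_def by simp
  show "s \<in> S \<Longrightarrow> f v s + g v s = - (f (v + s) (- s) + g (v + s) (- s))"
    using f g unfolding is_flow_def by (metis minus_add_distrib)
  show "(\<Sum>s\<in>S. f v s + g v s) = 0"
    using f g unfolding is_flow_def by (metis add.right_neutral sum.distrib)
qed

lemma is_flow_uminus:
  assumes f: "is_flow S f"
  shows "is_flow S (\<lambda>v s. - f v s)"
  unfolding is_flow_def
proof (intro conjI allI ballI impI)
  fix v s
  show "s \<notin> S \<Longrightarrow> - f v s = 0"
    using f unfolding is_flow_def by simp
  show "s \<in> S \<Longrightarrow> - f v s = - (- f (v + s) (- s))"
    using f unfolding is_flow_def by metis
  show "(\<Sum>s\<in>S. - f v s) = 0"
    using f unfolding is_flow_def by (metis neg_equal_0_iff_equal sum_negf)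
qed

lemma E_flows_zero: "(\<lambda>v s. 0) \<in> E_flows S"
  by (simp add: E_flows_def is_flow_def edge_flow_def Let_def)

lemma E_flows_add:
  assumes "f \<in> E_flows S" "g \<in> E_flows S"
  shows "(\<lambda>v s. f v s + g v s) \<in> E_flows S"
proof -
  have "edge_flow S (\<lambda>v s. f v s + g v s) e = edge_flow S f e + edge_flow S g e" for e
    by (simp add: edge_flow_def Let_def)
  then show ?thesis
    using assms is_flow_add[of S f g] by (simp add: E_flows_def sum.distrib)
qed

lemma E_flows_uminus:
  assumes "f \<in> E_flows S"
  shows "(\<lambda>v s. - f v s) \<in> E_flows S"
proof -
  have "edge_flow S (\<lambda>v s. - f v s) e = - edge_flow S f e" for e
    by (simp add: edge_flow_def Let_def)
  then show ?thesis
    using assms is_flow_uminus[of S f] by (simp add: E_flows_def sum_negf)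
qed

lemma H_flows_subset_E_flows:
  fixes S :: "'a::{ab_group_add,finite} set"
  assumes "even (card (UNIV :: 'a set))" and "\<forall>s\<in>S. - s \<in> S"
  shows "H_flows S \<subseteq> E_flows S"
proof
  fix f assume "f \<in> H_flows S"
  then show "f \<in> E_flows S"
    unfolding H_flows_def
  proof (induction rule: int_span.induct)
    case (gen c)
    then obtain vs where c: "c = cycle_flow vs" and ham: "ham_cycle S vs" by blast
    have "length vs = card (UNIV :: 'a set)"
      using ham distinct_card[of vs] by (simp add: ham_cycle_def)
    then show ?case
      using is_flow_cycle_flow[OF ham assms(2)] even_edge_sum_cycle_flow[OF ham] assms(1) c
      by (simp add: E_flows_def)
  qed (simp_all add: E_flows_zero E_flows_add E_flows_uminus)
qed

lemma int_span_smul: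
  assumes f: "f \<in> int_span C"
  shows "(\<lambda>v s. (c::int) * f v s) \<in> int_span C"
proof (induction c rule: int_induct[where k = 0])
  case base
  then show ?case using int_span.zero by simp
next
  case (step1 c)
  have "(\<lambda>v s. c * f v s + f v s) \<in> int_span C"
    by (rule int_span.add[OF step1(2) f])
  then show ?case by (simp add: algebra_simps)
next
  case (step2 c)
  have "(\<lambda>v s. c * f v s + - f v s) \<in> int_span C"
    by (rule int_span.add[OF step2(2) int_span.neg[OF f]])
  then show ?case by (simp add: algebra_simps)
qed

lemma int_span_sum:
  assumes "finite A" "\<And>a. a \<in> A \<Longrightarrow> g a \<in> C"
  shows "(\<lambda>v s. \<Sum>a\<in>A. c a * g a v s) \<in> int_span C"
  using assms
proof (induction A rule: finite_induct)
  case empty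
  then show ?case using int_span.zero by simp
next
  case (insert a A)
  have "(\<lambda>v s. c a * g a v s) \<in> int_span C"
    using insert(4) by (intro int_span_smul int_span.gen) simp
  with insert have "(\<lambda>v s. c a * g a v s + (\<Sum>a\<in>A. c a * g a v s)) \<in> int_span C"
    by (intro int_span.add) simp_all
  then show ?case using insert(1,2) by simp
qed

section \<open>Transfer along a labelling of the Cayley graph\<close>

lemma even_sum_cong:
  fixes g h :: "'b \<Rightarrow> int"
  assumes "\<And>x. x \<in> A \<Longrightarrow> even (g x - h x)"
  shows "even (sum g A) \<longleftrightarrow> even (sum h A)"
proof -
  have "even (sum g A - sum h A)"
    using assms by (simp add: sum_subtractf[symmetric] dvd_sum)
  then show ?thesis by auto
qed

definition hamiltonian_cycle_on :: "('v \<Rightarrow> 'v \<Rightarrow> bool) \<Rightarrow> 'v set \<Rightarrow> 'v list \<Rightarrow> bool" where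
  "hamiltonian_cycle_on adj V cy \<longleftrightarrow>
     distinct cy \<and> set cy = V \<and> 3 \<le> length cy \<and> (\<forall>(v, w)\<in>set (zip cy (rotate1 cy)). adj v w)"

locale cayley_labelling =
  fixes S :: "'a::{ab_group_add,finite} set"
    and label :: "'a \<Rightarrow> nat" and n :: nat and adj :: "nat \<Rightarrow> nat \<Rightarrow> bool"
  assumes label_bij: "bij_betw label UNIV {..<n}"
    and adj_label: "\<And>x y. adj (label x) (label y) \<longleftrightarrow> y - x \<in> S"
    and adj_bounded: "\<And>i j. adj i j \<Longrightarrow> i < n \<and> j < n"
    and zero_notin: "0 \<notin> S"
    and S_sym: "\<forall>s\<in>S. - s \<in> S"
begin

definition vertex :: "nat \<Rightarrow> 'a" where
  "vertex = inv_into UNIV label"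

lemma label_less: "label x < n"
  using label_bij by (auto simp: bij_betw_def)

lemma vertex_label [simp]: "vertex (label x) = x"
  using label_bij by (simp add: vertex_def bij_betw_def)

lemma label_vertex [simp]: "i < n \<Longrightarrow> label (vertex i) = i"
  using label_bij by (simp add: vertex_def bij_betw_inv_into_right)

lemma inj_on_vertex: "inj_on vertex {..<n}"
  by (metis inj_onI label_vertex lessThan_iff)

lemma adj_vertex: "adj i j \<Longrightarrow> vertex j - vertex i \<in> S"
  using adj_label[of "vertex i" "vertex j"] adj_bounded[of i j] by simp

lemma adj_sym:
  assumes "adj i j"
  shows "adj j i"
proof -
  have "- (vertex j - vertex i) \<in> S"
    using adj_vertex[OF assms] S_sym by blast
  then show ?thesis
    using adj_label[of "vertex j" "vertex i"] adj_bounded[OF assms] by simp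
qed

lemma adj_irrefl: "\<not> adj i i"
  using adj_vertex[of i i] zero_notin by auto

definition label_flow :: "('a \<Rightarrow> 'a \<Rightarrow> int) \<Rightarrow> nat \<Rightarrow> nat \<Rightarrow> int" where
  "label_flow f i j = f (vertex i) (vertex j - vertex i)"

lemma label_flow_antisym:
  assumes "is_flow S f" "adj i j"
  shows "label_flow f j i = - label_flow f i j"
proof -
  have "f (vertex i) (vertex j - vertex i) = - f (vertex i + (vertex j - vertex i)) (- (vertex j - vertex i))"
    using assms adj_vertex unfolding is_flow_def by blast
  then show ?thesis unfolding label_flow_def by simp
qed

lemma label_flow_conservation:
  assumes "is_flow S f"
  shows "(\<Sum>j | adj i j. label_flow f i j) = 0"
proof (cases "i < n")
  case True
  have "bij_betw (\<lambda>j. vertex j - vertex i) {j. adj i j} S"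
  proof (rule bij_betw_imageI)
    show "inj_on (\<lambda>j. vertex j - vertex i) {j. adj i j}"
      using inj_on_vertex adj_bounded by (auto simp: inj_on_def)
    show "(\<lambda>j. vertex j - vertex i) ` {j. adj i j} = S"
    proof
      show "(\<lambda>j. vertex j - vertex i) ` {j. adj i j} \<subseteq> S"
        using adj_vertex by blast
      show "S \<subseteq> (\<lambda>j. vertex j - vertex i) ` {j. adj i j}"
      proof
        fix s assume "s \<in> S"
        then have "adj i (label (vertex i + s))"
          using adj_label[of "vertex i" "vertex i + s"] True by simp
        moreover have "s = vertex (label (vertex i + s)) - vertex i" by simp
        ultimately show "s \<in> (\<lambda>j. vertex j - vertex i) ` {j. adj i j}" by blast
      qed
    qed
  qed
  then have "(\<Sum>j | adj i j. label_flow f i j) = (\<Sum>s\<in>S. f (vertex i) s)"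
    unfolding label_flow_def by (rule sum.reindex_bij_betw)
  moreover have "(\<Sum>s\<in>S. f (vertex i) s) = 0"
    using assms unfolding is_flow_def by blast
  ultimately show ?thesis by simp
next
  case False
  then have "{j. adj i j} = {}" using adj_bounded by auto
  then show ?thesis by simp
qed

lemma vertex_edge_in_cayley_edges: "adj i j \<Longrightarrow> {vertex i, vertex j} \<in> cayley_edges S"
proof -
  assume "adj i j"
  then have "{vertex i, vertex j} = {vertex i, vertex i + (vertex j - vertex i)}"
    and "vertex j - vertex i \<in> S"
    using adj_vertex by simp_all
  then show ?thesis
    unfolding cayley_edges_def by blast
qed

lemma cayley_edges_eq:
  "cayley_edges S = (\<lambda>(i, j). {vertex i, vertex j}) ` {(i, j). adj i j \<and> i < j}"
proof
  show "cayley_edges S \<subseteq> (\<lambda>(i, j). {vertex i, vertex j}) ` {(i, j). adj i j \<and> i < j}"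
  proof
    fix e assume "e \<in> cayley_edges S"
    then obtain g s where e: "e = {g, g + s}" and s: "s \<in> S"
      unfolding cayley_edges_def by blast
    define i j where "i = label g" and "j = label (g + s)"
    have ij: "adj i j" using adj_label[of g "g + s"] s by (simp add: i_def j_def)
    have e_ij: "e = {vertex i, vertex j}" by (simp add: e i_def j_def)
    consider "i < j" | "j < i"
      using adj_irrefl ij by (metis linorder_neqE_nat)
    then show "e \<in> (\<lambda>(i, j). {vertex i, vertex j}) ` {(i, j). adj i j \<and> i < j}"
    proof cases
      case 1
      then have "(i, j) \<in> {(i, j). adj i j \<and> i < j}" using ij by simp
      then show ?thesis by (rule rev_image_eqI) (simp add: e_ij)
    next
      case 2
      then have "(j, i) \<in> {(i, j). adj i j \<and> i < j}" using adj_sym[OF ij] by simp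
      then show ?thesis by (rule rev_image_eqI) (simp add: e_ij insert_commute)
    qed
  qed
  show "(\<lambda>(i, j). {vertex i, vertex j}) ` {(i, j). adj i j \<and> i < j} \<subseteq> cayley_edges S"
    using vertex_edge_in_cayley_edges by auto
qed

lemma inj_on_vertex_edges: "inj_on (\<lambda>(i, j). {vertex i, vertex j}) {(i, j). adj i j \<and> i < j}"
proof (rule inj_onI, clarify)
  fix i j i' j'
  assume ij: "adj i j" "i < j" and ij': "adj i' j'" "i' < j'"
    and eq: "{vertex i, vertex j} = {vertex i', vertex j'}"
  have "label ` {vertex i, vertex j} = label ` {vertex i', vertex j'}"
    using eq by simp
  then have "{i, j} = {i', j'}"
    using adj_bounded[OF ij(1)] adj_bounded[OF ij'(1)] by simp
  then show "i = i' \<and> j = j'"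
    using ij(2) ij'(2) by (auto simp: doubleton_eq_iff)
qed

lemma even_edge_flow_diff_label_flow:
  assumes flow: "is_flow S f" and ij: "adj i j"
  shows "even (edge_flow S f {vertex i, vertex j} - label_flow f i j)"
proof -
  obtain v w where vw: "{vertex i, vertex j} = {v, w}"
    and ef: "edge_flow S f {vertex i, vertex j} = f v (w - v)"
    using edge_flow_obtain[OF vertex_edge_in_cayley_edges[OF ij]] by metis
  then have "edge_flow S f {vertex i, vertex j} = label_flow f i j
      \<or> edge_flow S f {vertex i, vertex j} = label_flow f j i"
    unfolding label_flow_def by (auto simp: doubleton_eq_iff)
  then show ?thesis
    using label_flow_antisym[OF flow ij] by auto
qed

lemma even_edge_sum_iff_label_flow:
  assumes flow: "is_flow S f"
  shows "even (\<Sum>e\<in>cayley_edges S. edge_flow S f e)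
     \<longleftrightarrow> even (\<Sum>(i, j) | adj i j \<and> i < j. label_flow f i j)"
proof -
  have "(\<Sum>e\<in>cayley_edges S. edge_flow S f e)
      = (\<Sum>(i, j) | adj i j \<and> i < j. edge_flow S f {vertex i, vertex j})"
    unfolding cayley_edges_eq sum.reindex[OF inj_on_vertex_edges] by (simp add: comp_def case_prod_unfold)
  then show ?thesis
    using even_sum_cong[of "{(i, j). adj i j \<and> i < j}"
        "\<lambda>(i, j). edge_flow S f {vertex i, vertex j}" "\<lambda>(i, j). label_flow f i j"]
      even_edge_flow_diff_label_flow[OF flow]
    by auto
qed

lemma ham_cycle_map_vertex:
  assumes "hamiltonian_cycle_on adj {..<n} cy"
  shows "ham_cycle S (map vertex cy)"
proof -
  have dist: "distinct cy" and cy_set: "set cy = {..<n}" and len: "3 \<le> length cy"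
    and cy_adj: "\<And>v w. cyclic_succ cy v w \<Longrightarrow> adj v w"
    using assms unfolding hamiltonian_cycle_on_def cyclic_succ_def by auto
  have "distinct (map vertex cy)"
    using dist cy_set inj_on_vertex by (simp add: distinct_map)
  moreover have "set (map vertex cy) = UNIV"
    using cy_set label_less by (auto intro!: image_eqI[where x = "label _"])
  moreover have "map vertex cy ! (Suc i mod length cy) - map vertex cy ! i \<in> S"
    if i: "i < length cy" for i
  proof -
    have "0 < length cy" using i by linarith
    then have "Suc i mod length cy < length cy" by (rule mod_less_divisor)
    moreover have "adj (cy ! i) (cy ! (Suc i mod length cy))"
      using i by (intro cy_adj) (auto simp: cyclic_succ_nth)
    ultimately show ?thesis using i adj_vertex by simp
  qed
  ultimately show ?thesis
    using len by (simp add: ham_cycle_def)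
qed

lemma cycle_flow_map_vertex:
  assumes cy_set: "set cy = {..<n}"
  shows "cycle_flow (map vertex cy) x s = cyclic_flow cy (label x) (label (x + s))"
proof -
  have succ_iff: "cyclic_succ (map vertex cy) (vertex a) (vertex b) \<longleftrightarrow> cyclic_succ cy a b"
    if "a < n" "b < n" for a b
  proof (rule cyclic_succ_map)
    have "insert a (insert b (set cy)) = {..<n}" using cy_set that by auto
    then show "inj_on vertex (insert a (insert b (set cy)))" using inj_on_vertex by simp
  qed
  have "cyclic_succ (map vertex cy) x (x + s) \<longleftrightarrow> cyclic_succ cy (label x) (label (x + s))"
    "cyclic_succ (map vertex cy) (x + s) x \<longleftrightarrow> cyclic_succ cy (label (x + s)) (label x)"
    using succ_iff[of "label x" "label (x + s)"] succ_iff[of "label (x + s)" "label x"] label_less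
    by simp_all
  then show ?thesis
    unfolding cycle_flow_eq_cyclic_flow cyclic_flow_def by simp
qed

theorem E_flows_subset_H_flows:
  assumes cycles: "\<forall>cy\<in>set cys. hamiltonian_cycle_on adj {..<n} cy"
    and lattice: "\<And>F. (\<And>i j. adj i j \<Longrightarrow> F j i = - F i j) \<Longrightarrow> (\<And>i. (\<Sum>j | adj i j. F i j) = 0)
        \<Longrightarrow> even (\<Sum>(i, j) | adj i j \<and> i < j. F i j)
        \<Longrightarrow> \<exists>c. \<forall>i j. adj i j \<longrightarrow> F i j = (\<Sum>m<length cys. c m * cyclic_flow (cys ! m) i j)"
  shows "E_flows S \<subseteq> H_flows S"
proof
  fix f assume "f \<in> E_flows S"
  then have flow: "is_flow S f" and even: "even (\<Sum>e\<in>cayley_edges S. edge_flow S f e)"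
    by (auto simp: E_flows_def)
  obtain c where c: "\<And>i j. adj i j \<Longrightarrow> label_flow f i j = (\<Sum>m<length cys. c m * cyclic_flow (cys ! m) i j)"
    using lattice[of "label_flow f"] label_flow_antisym[OF flow] label_flow_conservation[OF flow]
      even even_edge_sum_iff_label_flow[OF flow] by blast
  define g where "g m = cycle_flow (map vertex (cys ! m))" for m
  have ham: "ham_cycle S (map vertex (cys ! m))" if "m < length cys" for m
    using cycles that by (simp add: ham_cycle_map_vertex)
  have "f v s = (\<Sum>m<length cys. c m * g m v s)" for v s
  proof (cases "s \<in> S")
    case True
    then have "adj (label v) (label (v + s))"
      using adj_label[of v "v + s"] by simp
    then have "f v s = (\<Sum>m<length cys. c m * cyclic_flow (cys ! m) (label v) (label (v + s)))"
      using c unfolding label_flow_def by fastforce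
    also have "\<dots> = (\<Sum>m<length cys. c m * g m v s)"
      using cycles unfolding g_def hamiltonian_cycle_on_def
      by (intro sum.cong) (simp_all add: cycle_flow_map_vertex)
    finally show ?thesis .
  next
    case False
    then show ?thesis
      using flow is_flow_cycle_flow[OF ham S_sym] unfolding g_def is_flow_def by simp
  qed
  then have "f = (\<lambda>v s. \<Sum>m<length cys. c m * g m v s)" by blast
  also have "\<dots> \<in> H_flows S"
    unfolding H_flows_def using ham by (intro int_span_sum) (auto simp: g_def)
  finally show "f \<in> H_flows S" .
qed

end

section \<open>Integer linear forms on edge values\<close>

definition dot :: "int list \<Rightarrow> int list \<Rightarrow> int" where
  "dot u x = sum_list (map2 (*) u x)"

(* Zero coefficients are skipped; this keeps the evaluation of the certificate below fast. *)
fun lincomb :: "nat \<Rightarrow> int list \<Rightarrow> int list list \<Rightarrow> int list" where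
  "lincomb n (a # as) (u # us) =
     (if a = 0 then lincomb n as us else map2 (+) (map ((*) a) u) (lincomb n as us))"
| "lincomb n _ _ = replicate n 0"

lemma dot_add: "length u = length v \<Longrightarrow> dot (map2 (+) u v) x = dot u x + dot v x"
proof (induction u v arbitrary: x rule: list_induct2)
  case (Cons a u b v)
  then show ?case by (cases x) (simp_all add: dot_def algebra_simps)
qed (simp add: dot_def)

lemma dot_scale: "dot (map ((*) a) u) x = a * dot u x"
proof (induction u arbitrary: x)
  case (Cons b u)
  then show ?case by (cases x) (simp_all add: dot_def algebra_simps)
qed (simp add: dot_def)

lemma dot_replicate_zero: "dot (replicate n 0) x = 0"
proof (induction n arbitrary: x)
  case (Suc n)
  then show ?case by (cases x) (simp_all add: dot_def)
qed (simp add: dot_def)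

lemma length_lincomb: "\<forall>u\<in>set us. length u = n \<Longrightarrow> length (lincomb n as us) = n"
  by (induction n as us rule: lincomb.induct) simp_all

lemma dot_lincomb:
  "\<forall>u\<in>set us. length u = n \<Longrightarrow> dot (lincomb n as us) x = sum_list (map2 (\<lambda>a u. a * dot u x) as us)"
  by (induction n as us rule: lincomb.induct)
    (simp_all add: dot_add dot_scale dot_replicate_zero length_lincomb)

lemma dot_append_map:
  "dot (map g es @ [c]) (map h es @ [k]) = sum_list (map (\<lambda>e. g e * h e) es) + c * k"
  by (induction es) (simp_all add: dot_def)

lemma sum_list_map2_nth:
  "length xs = length ys \<Longrightarrow> sum_list (map2 f xs ys) = (\<Sum>m<length xs. f (xs ! m) (ys ! m))"
  by (induction xs ys rule: list_induct2) (simp_all add: sum.lessThan_Suc_shift del: sum.lessThan_Suc)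

lemma sum_split_less_greater:
  fixes v :: "'v::linorder"
  assumes "finite A" "v \<notin> A"
  shows "sum g {j\<in>A. v < j} + sum g {j\<in>A. j < v} = sum g A"
proof -
  have "A = {j\<in>A. v < j} \<union> {j\<in>A. j < v}"
  proof (intro equalityI subsetI)
    fix j assume "j \<in> A"
    moreover have "j \<noteq> v" using assms(2) \<open>j \<in> A\<close> by auto
    ultimately show "j \<in> {j\<in>A. v < j} \<union> {j\<in>A. j < v}" by (auto simp: neq_iff)
  qed auto
  moreover have "finite {j\<in>A. v < j}" "finite {j\<in>A. j < v}"
    using assms(1) by simp_all
  ultimately show ?thesis
    by (metis (no_types, lifting) disjoint_iff_not_equal less_asym mem_Collect_eq sum.union_disjoint)
qed

lemma sum_oriented_edges_at:
  fixes adj :: "'v::linorder \<Rightarrow> 'v \<Rightarrow> bool" and F :: "'v \<Rightarrow> 'v \<Rightarrow> 'b::comm_ring_1"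
  assumes fin: "finite {(i, j). adj i j}" and sym: "\<And>i j. adj i j \<Longrightarrow> adj j i"
    and irrefl: "\<And>i. \<not> adj i i" and anti: "\<And>i j. adj i j \<Longrightarrow> F j i = - F i j"
  shows "(\<Sum>(i, j) | adj i j \<and> i < j. (if i = v then 1 else if j = v then -1 else 0) * F i j)
    = (\<Sum>j | adj v j. F v j)"
proof -
  let ?P = "{(i, j). adj i j \<and> i < j}"
  have fin_P: "finite ?P" by (rule finite_subset[OF _ fin]) auto
  have split: "(if i = v then 1 else if j = v then -1 else 0) * F i j
      = (if i = v then F v j else 0) + (if j = v then F v i else 0)" if "adj i j" "i < j" for i j
    using anti[OF that(1)] that(2) by auto
  have "(\<Sum>(i, j)\<in>?P. (if i = v then 1 else if j = v then -1 else 0) * F i j)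
      = (\<Sum>(i, j)\<in>?P. if i = v then F v j else 0) + (\<Sum>(i, j)\<in>?P. if j = v then F v i else 0)"
    unfolding sum.distrib[symmetric] by (intro sum.cong refl) (clarsimp simp: split)
  also have "(\<Sum>(i, j)\<in>?P. if i = v then F v j else 0) = (\<Sum>j | adj v j \<and> v < j. F v j)"
  proof -
    have "(\<Sum>(i, j)\<in>?P. if i = v then F v j else 0) = (\<Sum>(i, j)\<in>Pair v ` {j. adj v j \<and> v < j}. F v j)"
      using fin_P by (intro sum.mono_neutral_cong_right) auto
    then show ?thesis by (simp add: sum.reindex inj_on_def)
  qed
  also have "(\<Sum>(i, j)\<in>?P. if j = v then F v i else 0) = (\<Sum>j | adj v j \<and> j < v. F v j)"
  proof -
    have adj_v: "adj v j \<longleftrightarrow> adj j v" for j using sym by blast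
    have "(\<Sum>(i, j)\<in>?P. if j = v then F v i else 0) = (\<Sum>(i, j)\<in>(\<lambda>i. (i, v)) ` {j. adj v j \<and> j < v}. F v i)"
      using fin_P adj_v by (intro sum.mono_neutral_cong_right) auto
    then show ?thesis by (simp add: sum.reindex inj_on_def)
  qed
  also have "(\<Sum>j | adj v j \<and> v < j. F v j) + (\<Sum>j | adj v j \<and> j < v. F v j) = (\<Sum>j | adj v j. F v j)"
  proof -
    have "finite {j. adj v j}"
      using finite_imageI[OF fin, of snd] by (rule finite_subset[rotated]) force
    then show ?thesis
      using sum_split_less_greater[of "{j. adj v j}" v "F v"] irrefl by simp
  qed
  finally show ?thesis .
qed

(* The extra last coordinate carries half of the edge sum in the lattice argument below. *)
definition edge_coords :: "('v \<times> 'v) list \<Rightarrow> ('v \<Rightarrow> 'v \<Rightarrow> int) \<Rightarrow> int \<Rightarrow> int list" where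
  "edge_coords es F k = map (\<lambda>(i, j). F i j) es @ [k]"

definition coord_form :: "('v \<times> 'v) list \<Rightarrow> 'v \<times> 'v \<Rightarrow> int list" where
  "coord_form es e = map (\<lambda>e'. if e' = e then 1 else 0) es @ [0]"

definition vertex_form :: "('v \<times> 'v) list \<Rightarrow> 'v \<Rightarrow> int list" where
  "vertex_form es v = map (\<lambda>(i, j). if i = v then 1 else if j = v then -1 else 0) es @ [0]"

definition parity_form :: "('v \<times> 'v) list \<Rightarrow> int list" where
  "parity_form es = map (\<lambda>_. 1) es @ [-2]"

lemma dot_coord_form:
  assumes "distinct es" "(i, j) \<in> set es"
  shows "dot (coord_form es (i, j)) (edge_coords es F k) = F i j"
proof -
  have "dot (coord_form es (i, j)) (edge_coords es F k) = (\<Sum>e\<in>set es. if e = (i, j) then case_prod F e else 0)"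
    using assms(1) by (simp add: coord_form_def edge_coords_def dot_append_map sum_list_distinct_conv_sum_set
      if_distrib[of "\<lambda>c. c * _"] cong: if_cong)
  then show ?thesis using assms(2) by simp
qed

lemma dot_vertex_form:
  "distinct es \<Longrightarrow> dot (vertex_form es v) (edge_coords es F k)
    = (\<Sum>(i, j)\<in>set es. (if i = v then 1 else if j = v then -1 else 0) * F i j)"
  by (simp add: vertex_form_def edge_coords_def dot_append_map sum_list_distinct_conv_sum_set case_prod_beta)

lemma dot_parity_form:
  "distinct es \<Longrightarrow> dot (parity_form es) (edge_coords es F k) = (\<Sum>(i, j)\<in>set es. F i j) - 2 * k"
  by (simp add: parity_form_def edge_coords_def dot_append_map sum_list_distinct_conv_sum_set case_prod_beta)

section \<open>The graph \<open>K\<^sub>3 \<box> K\<^sub>3 \<box> K\<^sub>2\<close>\<close>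

definition k332_vertex :: "nat \<Rightarrow> (nat \<times> nat) \<times> nat" where
  "k332_vertex i = ((i mod 3, i div 3 mod 3), i div 9)"

definition k332_adj :: "nat \<Rightarrow> nat \<Rightarrow> bool" where
  "k332_adj i j \<longleftrightarrow> i < 18 \<and> j < 18 \<and>
     snd (cart_prod_graph (cart_prod_graph (complete_graph 3) (complete_graph 3)) (complete_graph 2))
       (k332_vertex i) (k332_vertex j)"

lemma k332_adj_sym: "k332_adj i j \<Longrightarrow> k332_adj j i"
  by (auto simp: k332_adj_def cart_prod_graph_def complete_graph_def)

lemma k332_adj_irrefl: "\<not> k332_adj i i"
  by (auto simp: k332_adj_def cart_prod_graph_def complete_graph_def)

lemma finite_k332_adj: "finite {(i, j). k332_adj i j}"
  by (rule finite_subset[of _ "{..<18} \<times> {..<18}"]) (auto simp: k332_adj_def)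

lemma k332_vertex_encode:
  assumes "a < 3" "b < 3" "c < 2"
  shows "k332_vertex (a + 3 * b + 9 * c) = ((a, b), c)"
proof -
  have eq: "a + 3 * b + 9 * c = a + 3 * (b + 3 * c)" by simp
  have mod3: "(a + 3 * b + 9 * c) mod 3 = a"
    unfolding eq mod_mult_self2 using assms(1) by simp
  have div3: "(a + 3 * b + 9 * c) div 3 = b + 3 * c"
    unfolding eq div_mult_self2[of 3] using assms(1) by simp
  have "(a + 3 * b + 9 * c) div 9 = (a + 3 * b + 9 * c) div 3 div 3"
    by (simp add: div_mult2_eq[symmetric])
  then show ?thesis
    using assms mod3 div3 by (simp add: k332_vertex_def)
qed

lemma bij_betw_k332_vertex:
  "bij_betw k332_vertex {..<18}
     (fst (cart_prod_graph (cart_prod_graph (complete_graph 3) (complete_graph 3)) (complete_graph 2)))"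
proof (rule bij_betw_byWitness[where f' = "\<lambda>((a, b), c). a + 3 * b + 9 * c"])
  have "i mod 3 + 3 * (i div 3 mod 3) + 9 * (i div 9) = i" for i :: nat
    using mod_mult2_eq[of i 3 3] div_mult_mod_eq[of i 9] by simp
  then show "\<forall>i\<in>{..<18}. (\<lambda>((a, b), c). a + 3 * b + 9 * c) (k332_vertex i) = i"
    by (simp add: k332_vertex_def)
  show "\<forall>p\<in>fst (cart_prod_graph (cart_prod_graph (complete_graph 3) (complete_graph 3)) (complete_graph 2)).
      k332_vertex ((\<lambda>((a, b), c). a + 3 * b + 9 * c) p) = p"
    by (auto simp: cart_prod_graph_def complete_graph_def k332_vertex_encode)
  show "k332_vertex ` {..<18}
      \<subseteq> fst (cart_prod_graph (cart_prod_graph (complete_graph 3) (complete_graph 3)) (complete_graph 2))"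
    by (auto simp: k332_vertex_def cart_prod_graph_def complete_graph_def)
  show "(\<lambda>((a, b), c). a + 3 * b + 9 * c) `
      fst (cart_prod_graph (cart_prod_graph (complete_graph 3) (complete_graph 3)) (complete_graph 2))
      \<subseteq> {..<18}"
    by (auto simp: cart_prod_graph_def complete_graph_def)
qed

lemma k332_labelling:
  fixes S :: "'a::ab_group_add set"
  assumes "graph_iso (cayley_graph S)
     (cart_prod_graph (cart_prod_graph (complete_graph 3) (complete_graph 3)) (complete_graph 2))"
  shows "\<exists>label. bij_betw label UNIV {..<18} \<and> (\<forall>x y. k332_adj (label x) (label y) \<longleftrightarrow> y - x \<in> S)"
proof -
  let ?G = "cart_prod_graph (cart_prod_graph (complete_graph 3) (complete_graph 3)) (complete_graph 2)"
  obtain \<phi> where \<phi>: "bij_betw \<phi> UNIV (fst ?G)" and adj: "\<And>x y. snd ?G (\<phi> x) (\<phi> y) \<longleftrightarrow> y - x \<in> S"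
    using assms unfolding graph_iso_def cayley_graph_def by auto
  define label where "label = inv_into {..<18} k332_vertex \<circ> \<phi>"
  have vertex_label: "k332_vertex (label x) = \<phi> x" for x
  proof -
    have "\<phi> x \<in> k332_vertex ` {..<18}"
      using \<phi> bij_betw_k332_vertex by (auto simp: bij_betw_def)
    then show ?thesis by (simp add: label_def f_inv_into_f)
  qed
  have "bij_betw label UNIV {..<18}"
    unfolding label_def using \<phi> bij_betw_inv_into[OF bij_betw_k332_vertex] by (rule bij_betw_trans)
  moreover have "k332_adj (label x) (label y) \<longleftrightarrow> y - x \<in> S" for x y
    using calculation adj[of x y] by (auto simp: k332_adj_def vertex_label bij_betw_def)
  ultimately show ?thesis by blast
qed

definition k332_edges :: "(nat \<times> nat) list" where
  "k332_edges =
   [(0, 1), (0, 2), (0, 3), (0, 6), (0, 9), (1, 2), (1, 4), (1, 7), (1, 10), (2, 5), (2, 8), (2,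
   11), (3, 4), (3, 5), (3, 6), (3, 12), (4, 5), (4, 7), (4, 13), (5, 8), (5, 14), (6, 7), (6, 8),
   (6, 15), (7, 8), (7, 16), (8, 17), (9, 10), (9, 11), (9, 12), (9, 15), (10, 11), (10, 13), (10,
   16), (11, 14), (11, 17), (12, 13), (12, 14), (12, 15), (13, 14), (13, 16), (14, 17), (15, 16),
   (15, 17), (16, 17)]"

lemma set_k332_edges: "set k332_edges = {(i, j). k332_adj i j \<and> i < j}"
proof -
  have edges: "k332_edges = filter (\<lambda>(i, j). i < j \<and> k332_adj i j) (List.product [0..<18] [0..<18])"
    by code_simp
  show ?thesis unfolding edges by (auto simp: k332_adj_def)
qed

lemma distinct_k332_edges: "distinct k332_edges"
  by code_simp

definition k332_cycles :: "nat list list" where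
  "k332_cycles =
   [[0, 9, 11, 2, 5, 4, 3, 6, 7, 8, 17, 15, 12, 14, 13, 16, 10, 1],
    [0, 6, 8, 7, 1, 4, 3, 5, 2, 11, 10, 13, 12, 14, 17, 16, 15, 9],
    [0, 2, 11, 10, 13, 16, 17, 8, 6, 7, 1, 4, 3, 5, 14, 12, 15, 9],
    [0, 1, 10, 13, 14, 11, 2, 8, 5, 4, 7, 16, 17, 15, 9, 12, 3, 6],
    [0, 2, 8, 7, 16, 17, 11, 10, 13, 14, 12, 9, 15, 6, 3, 5, 4, 1],
    [0, 6, 15, 17, 8, 7, 1, 2, 11, 14, 5, 4, 13, 16, 10, 9, 12, 3],
    [0, 9, 15, 12, 3, 4, 13, 14, 17, 16, 7, 6, 8, 5, 2, 11, 10, 1],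
    [0, 3, 4, 7, 16, 13, 14, 11, 17, 8, 5, 2, 1, 10, 9, 12, 15, 6],
    [0, 9, 15, 6, 7, 4, 5, 3, 12, 13, 14, 11, 2, 8, 17, 16, 10, 1],
    [0, 1, 4, 3, 6, 15, 9, 11, 10, 13, 12, 14, 17, 16, 7, 8, 5, 2],
    [0, 9, 10, 1, 7, 8, 6, 15, 12, 14, 13, 16, 17, 11, 2, 5, 4, 3],
    [0, 2, 11, 14, 13, 12, 9, 10, 16, 17, 15, 6, 8, 7, 1, 4, 5, 3],
    [0, 3, 5, 14, 12, 15, 6, 8, 2, 11, 17, 16, 13, 4, 7, 1, 10, 9],
    [0, 6, 15, 12, 3, 5, 14, 17, 11, 2, 8, 7, 16, 13, 4, 1, 10, 9],
    [0, 1, 10, 16, 13, 14, 5, 3, 4, 7, 6, 8, 17, 15, 12, 9, 11, 2],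
    [0, 3, 12, 15, 9, 10, 1, 7, 4, 5, 14, 13, 16, 17, 11, 2, 8, 6],
    [0, 9, 10, 1, 7, 6, 3, 4, 13, 16, 15, 12, 14, 5, 8, 17, 11, 2],
    [0, 9, 12, 15, 17, 16, 10, 1, 7, 6, 8, 5, 3, 4, 13, 14, 11, 2],
    [0, 3, 6, 8, 17, 16, 15, 9, 11, 10, 13, 12, 14, 5, 4, 7, 1, 2],
    [0, 6, 8, 5, 4, 7, 16, 10, 1, 2, 11, 9, 15, 17, 14, 13, 12, 3],
    [0, 9, 10, 16, 17, 14, 11, 2, 1, 4, 13, 12, 15, 6, 7, 8, 5, 3],
    [0, 6, 7, 8, 2, 1, 10, 9, 15, 12, 14, 11, 17, 16, 13, 4, 5, 3],
    [0, 9, 15, 16, 7, 6, 3, 12, 14, 5, 4, 13, 10, 11, 17, 8, 2, 1],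
    [0, 6, 8, 7, 16, 13, 10, 1, 4, 3, 12, 14, 5, 2, 11, 17, 15, 9],
    [0, 1, 4, 5, 2, 8, 6, 7, 16, 10, 9, 15, 17, 11, 14, 13, 12, 3],
    [0, 2, 11, 10, 16, 13, 12, 14, 17, 8, 7, 1, 4, 5, 3, 6, 15, 9],
    [0, 9, 12, 14, 11, 10, 16, 13, 4, 3, 5, 2, 1, 7, 8, 17, 15, 6],
    [0, 9, 15, 17, 8, 6, 3, 4, 5, 2, 11, 14, 12, 13, 10, 16, 7, 1]]"

lemma k332_cycles_hamiltonian: "\<forall>cy\<in>set k332_cycles. hamiltonian_cycle_on k332_adj {..<18} cy"
  unfolding hamiltonian_cycle_on_def lessThan_atLeast0 atLeastLessThan_upt k332_adj_def k332_vertex_def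
    cart_prod_graph_def complete_graph_def
  by code_simp

definition k332_coefficients :: "int list list" where
  "k332_coefficients =
   [[0, 0, 0, 0, 0, 770, 0, 0, 0, 0, 0, 0, -1679, -5037, -4169, 0, -3918, -1419, 0, -1999, 0,
     -3249, -8038, 0, -3593, 0, 0, -941, 395, 1965, -19, -1711, -1827, 74, -3644, 593, -5028,
     -7142, -1329, -4452, -507, -740, -4114, -6962, -6640, 0],
    [0, 0, 0, 0, 0, 283, 0, 0, 0, 0, 0, 0, -620, -1858, -1537, 0, -1445, -523, 0, -738, 0,
     -1199, -2965, 0, -1326, 0, 0, -348, 145, 724, -7, -631, -674, 28, -1344, 218, -1854, -2634,
     -490, -1642, -186, -274, -1518, -2568, -2450, 0],
    [0, 0, 0, 0, 0, -178, 0, 0, 0, 0, 0, 0, 396, 1200, 993, 0, 935, 336, 0, 477, 0, 769, 1911,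
     0, 855, 0, 0, 224, -88, -466, 9, 409, 432, -18, 861, -136, 1191, 1696, 315, 1060, 121, 179,
     973, 1658, 1585, 0],
    [0, 0, 0, 0, 0, -647, 0, 0, 0, 0, 0, 0, 1394, 4161, 3444, 0, 3234, 1177, 0, 1650, 0, 2693,
     6646, 0, 2968, 0, 0, 779, -336, -1626, 7, 1410, 1515, -61, 3022, -499, 4165, 5908, 1099,
     3678, 419, 605, 3413, 5752, 5478, 0],
    [0, 0, 0, 0, 0, -5, 0, 0, 0, 0, 0, 0, 1, -10, -9, 0, -10, -1, 0, -5, 0, -1, -12, 0, -7, 0,
     0, -1, -5, 2, -5, -6, 0, 0, 0, -4, -3, -9, -2, -9, -2, -5, 0, -13, -17, 1],
    [0, 0, 0, 0, 0, 275, 0, 0, 0, 0, 0, 0, -599, -1798, -1489, 0, -1399, -507, 0, -714, 0,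
     -1159, -2868, 0, -1282, 0, 0, -337, 140, 701, -7, -611, -652, 27, -1300, 211, -1794, -2548,
     -474, -1589, -181, -264, -1468, -2485, -2370, 1],
    [0, 0, 0, 0, 0, -868, 0, 0, 0, 0, 0, 0, 1886, 5652, 4678, 0, 4395, 1593, 0, 2242, 0, 3648,
     9021, 0, 4031, 0, 0, 1056, -446, -2206, 19, 1918, 2051, -83, 4092, -668, 5645, 8016, 1491,
     4995, 569, 828, 4620, 7812, 7448, 1],
    [0, 0, 0, 0, 0, 825, 0, 0, 0, 0, 0, 0, -1781, -5322, -4405, 0, -4137, -1504, 0, -2111, 0,
     -3442, -8499, 0, -3796, 0, 0, -996, 427, 2079, -11, -1804, -1936, 78, -3862, 636, -5324,
     -7554, -1405, -4704, -536, -775, -4362, -7357, -7008, 0],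
    [0, 0, 0, 0, 0, 325, 0, 0, 0, 0, 0, 0, -701, -2094, -1734, 0, -1628, -592, 0, -831, 0,
     -1354, -3344, 0, -1494, 0, 0, -392, 168, 818, -4, -710, -762, 31, -1520, 250, -2095, -2972,
     -553, -1851, -211, -305, -1716, -2895, -2758, 1],
    [0, 0, 0, 0, 0, 838, 0, 0, 0, 0, 0, 0, -1821, -5460, -4521, 0, -4247, -1540, 0, -2167, 0,
     -3523, -8714, 0, -3894, 0, 0, -1020, 430, 2131, -19, -1854, -1981, 80, -3952, 645, -5453,
     -7743, -1441, -4826, -551, -800, -4462, -7547, -7196, 1],
    [0, 0, 0, 0, 0, -677, 0, 0, 0, 0, 0, 0, 1474, 4423, 3661, 0, 3440, 1246, 0, 1755, 0, 2853,
     7059, 0, 3155, 0, 0, 826, -347, -1726, 17, 1502, 1604, -65, 3200, -521, 4416, 6272, 1167,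
     3909, 445, 650, 3612, 6114, 5831, 1],
    [0, 0, 0, 0, 0, -65, 0, 0, 0, 0, 0, 0, 147, 448, 370, 0, 349, 124, 0, 178, 0, 286, 713, 0,
     319, 0, 0, 84, -31, -173, 5, 153, 161, -7, 320, -49, 443, 632, 117, 395, 44, 68, 361, 619,
     593, 1],
    [0, 0, 0, 0, 0, -334, 0, 0, 0, 0, 0, 0, 717, 2133, 1765, 0, 1657, 605, 0, 846, 0, 1384,
     3410, 0, 1523, 0, 0, 399, -176, -835, 1, 722, 778, -31, 1553, -259, 2139, 3032, 565, 1886,
     215, 310, 1754, 2949, 2807, 0],
    [0, 0, 0, 0, 0, -3, 0, 0, 0, 0, 0, 0, 15, 54, 44, 0, 43, 13, 0, 22, 0, 31, 83, 0, 38, 0, 0,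
     10, 1, -19, 4, 20, 17, -1, 33, -2, 48, 72, 13, 47, 5, 11, 38, 74, 74, 0],
    [0, 0, 0, 0, 0, 433, 0, 0, 0, 0, 0, 0, -940, -2812, -2327, 0, -2186, -793, 0, -1116, 0,
     -1817, -4489, 0, -2006, 0, 0, -527, 223, 1097, -8, -954, -1022, 42, -2038, 333, -2810,
     -3989, -742, -2485, -282, -412, -2301, -3887, -3705, 0],
    [0, 0, 0, 0, 0, -440, 0, 0, 0, 0, 0, 0, 949, 2833, 2345, 0, 2202, 801, 0, 1123, 0, 1833,
     4525, 0, 2021, 0, 0, 529, -229, -1108, 5, 960, 1031, -41, 2057, -340, 2836, 4023, 749, 2504,
     286, 412, 2323, 3916, 3730, 0],
    [0, 0, 0, 0, 0, 555, 0, 0, 0, 0, 0, 0, -1208, -3626, -3003, 0, -2821, -1022, 0, -1439, 0,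
     -2338, -5786, 0, -2586, 0, 0, -677, 284, 1415, -14, -1232, -1315, 53, -2623, 427, -3620,
     -5141, -957, -3205, -366, -532, -2961, -5012, -4780, 1],
    [0, 0, 0, 0, 0, -351, 0, 0, 0, 0, 0, 0, 759, 2274, 1882, 0, 1768, 641, 0, 902, 0, 1468,
     3630, 0, 1621, 0, 0, 426, -179, -887, 7, 771, 826, -34, 1647, -269, 2272, 3225, 599, 2009,
     228, 332, 1860, 3144, 2996, 1],
    [0, 0, 0, 0, 0, -1217, 0, 0, 0, 0, 0, 0, 2649, 7944, 6575, 0, 6178, 2238, 0, 3152, 0, 5125,
     12677, 0, 5665, 0, 0, 1485, -623, -3099, 29, 2697, 2882, -117, 5748, -936, 7931, 11264,
     2095, 7020, 799, 1165, 6490, 10980, 10470, 1],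
    [0, 0, 0, 0, 0, 825, 0, 0, 0, 0, 0, 0, -1791, -5365, -4441, 0, -4172, -1513, 0, -2129, 0,
     -3464, -8564, 0, -3827, 0, 0, -1003, 424, 2094, -17, -1821, -1948, 79, -3886, 635, -5360,
     -7610, -1416, -4742, -540, -786, -4387, -7416, -7070, 0],
    [0, 0, 0, 0, 0, -68, 0, 0, 0, 0, 0, 0, 146, 434, 359, 0, 337, 123, 0, 172, 0, 282, 694, 0,
     310, 0, 0, 81, -36, -170, 0, 147, 158, -6, 316, -53, 435, 617, 115, 384, 44, 63, 357, 600,
     571, 0],
    [0, 0, 0, 0, 0, -757, 0, 0, 0, 0, 0, 0, 1638, 4898, 4054, 0, 3808, 1383, 0, 1943, 0, 3166,
     7821, 0, 3494, 0, 0, 916, -391, -1913, 12, 1661, 1781, -72, 3552, -583, 4898, 6951, 1293,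
     4329, 493, 715, 4011, 6771, 6452, 0],
    [0, 0, 0, 0, 0, -378, 0, 0, 0, 0, 0, 0, 821, 2460, 2036, 0, 1913, 694, 0, 976, 0, 1588,
     3926, 0, 1754, 0, 0, 460, -194, -960, 8, 835, 893, -36, 1781, -291, 2457, 3489, 649, 2174,
     248, 360, 2012, 3400, 3241, 0],
    [0, 0, 0, 0, 0, -625, 0, 0, 0, 0, 0, 0, 1354, 4052, 3353, 0, 3150, 1143, 0, 1607, 0, 2618,
     6469, 0, 2890, 0, 0, 758, -322, -1582, 11, 1374, 1472, -60, 2937, -481, 4050, 5749, 1069,
     3581, 407, 592, 3316, 5601, 5338, 1],
    [0, 0, 0, 0, 0, -700, 0, 0, 0, 0, 0, 0, 1518, 4547, 3764, 0, 3536, 1283, 0, 1804, 0, 2936,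
     7258, 0, 3243, 0, 0, 850, -360, -1775, 14, 1543, 1651, -67, 3294, -539, 4543, 6450, 1200,
     4019, 458, 665, 3719, 6285, 5991, 0],
    [0, 0, 0, 0, 0, 506, 0, 0, 0, 0, 0, 0, -1105, -3319, -2747, 0, -2582, -934, 0, -1317, 0,
     -2139, -5295, 0, -2367, 0, 0, -620, 258, 1294, -14, -1128, -1203, 49, -2399, 389, -3311,
     -4704, -875, -2933, -334, -488, -2708, -4587, -4376, 0],
    [0, 0, 0, 0, 0, 261, 0, 0, 0, 0, 0, 0, -565, -1689, -1398, 0, -1313, -477, 0, -670, 0,
     -1092, -2697, 0, -1205, 0, 0, -316, 135, 660, -4, -573, -614, 25, -1225, 201, -1689, -2397,
     -446, -1493, -170, -247, -1383, -2335, -2225, 0],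
    [0, 0, 0, 0, 0, 78, 0, 0, 0, 0, 0, 0, -176, -535, -443, 0, -417, -149, 0, -213, 0, -342,
     -852, 0, -382, 0, 0, -99, 39, 208, -5, -183, -192, 8, -383, 60, -530, -756, -141, -473, -54,
     -81, -432, -739, -708, 0]]"

definition k332_relations :: "int list list" where
  "k332_relations = parity_form k332_edges # map (vertex_form k332_edges) [0..<18]"

definition k332_certificate :: "int list list" where
  "k332_certificate =
   [[1, 0, 2, 1, 1, 3, 2, 1, 3, 2, 1, 3, 2, 2, 4, 3, 2, 4, 3],
    [1, 0, 1, 2, 1, 2, 3, 1, 2, 3, 1, 2, 3, 2, 3, 4, 2, 3, 4],
    [1, 0, 1, 1, 2, 2, 2, 1, 2, 2, 1, 2, 2, 3, 3, 3, 2, 3, 3],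
    [-1, 0, -1, -1, -1, -2, -2, 0, -2, -2, -1, -2, -2, -2, -3, -3, -1, -3, -3],
    [-2, 0, -2, -2, -2, -4, -4, -2, -4, -4, -1, -4, -4, -4, -6, -6, -4, -6, -6],
    [-1, 0, -1, -1, -1, -2, -2, -1, -2, -2, -1, -2, -2, -2, -3, -3, -2, -3, -3],
    [-1, 0, -1, -1, -1, -1, -2, -1, -2, -2, -1, -2, -2, -2, -2, -3, -2, -3, -3],
    [0, 0, 0, 0, 0, 0, 0, 0, 1, 0, 0, 0, 0, 0, 0, 0, 0, 1, 0],
    [3, 0, 3, 3, 3, 6, 6, 3, 6, 6, 3, 7, 6, 6, 9, 9, 6, 9, 9],
    [1, 0, 1, 1, 1, 2, 3, 1, 2, 2, 1, 2, 2, 2, 3, 4, 2, 3, 3],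
    [-1, 0, -1, -1, -1, -2, -2, -1, -2, -1, -1, -2, -2, -2, -3, -3, -2, -3, -2],
    [0, 0, 0, 0, 0, 0, 0, 0, 0, 0, 0, 0, 1, 0, 0, 0, 0, 0, 0],
    [0, 0, 0, 0, 0, 0, 0, 0, 0, 0, 0, 0, 0, 0, 0, 0, 0, 0, 0],
    [1, 0, 1, 1, 1, 2, 2, 1, 2, 2, 1, 2, 2, 2, 3, 3, 2, 3, 3],
    [0, 0, 0, 0, 0, 0, 0, 0, 0, 0, 0, 0, 0, 0, 0, 0, 0, 0, 0],
    [0, 0, 0, 0, 0, 0, 0, 0, 0, 0, 0, 0, 0, 1, 0, 0, 0, 0, 0],
    [1, 0, 1, 1, 1, 2, 2, 1, 2, 2, 1, 2, 2, 2, 3, 3, 2, 3, 3],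
    [0, 0, 0, 0, 0, 0, 0, 0, 0, 0, 0, 0, 0, 0, 0, 0, 0, 0, 0],
    [-2, 0, -2, -2, -2, -4, -4, -2, -4, -4, -2, -4, -4, -4, -5, -6, -4, -6, -6],
    [1, 0, 1, 1, 1, 2, 2, 1, 2, 2, 1, 2, 2, 2, 3, 3, 2, 3, 3],
    [2, 0, 2, 2, 2, 4, 4, 2, 4, 4, 2, 4, 4, 4, 6, 7, 4, 6, 6],
    [1, 0, 1, 1, 1, 2, 2, 1, 2, 2, 1, 2, 2, 2, 3, 3, 2, 3, 3],
    [-2, 0, -2, -2, -2, -4, -4, -2, -4, -4, -2, -4, -4, -4, -6, -6, -4, -6, -6],
    [0, 0, 0, 0, 0, 0, 0, 0, 0, 0, 0, 0, 0, 0, 0, 0, 1, 0, 0],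
    [1, 0, 1, 1, 1, 2, 2, 1, 2, 2, 1, 2, 2, 2, 3, 3, 2, 3, 3],
    [0, 0, 0, 0, 0, 0, 0, 0, 0, 0, 0, 0, 0, 0, 0, 0, 0, 1, 0],
    [-1, 0, -1, -1, -1, -2, -2, -1, -2, -2, -1, -2, -2, -2, -3, -3, -2, -3, -2],
    [-1, 0, -1, -1, -1, -2, -2, -1, -2, -2, -1, -2, -2, -2, -3, -3, -2, -3, -3],
    [-1, 0, -1, -1, -1, -2, -2, -1, -2, -2, -1, -2, -2, -2, -3, -3, -2, -3, -3],
    [0, 0, 0, 0, 0, 0, 0, 0, 0, 0, 0, 0, 0, 0, 0, 0, 0, 0, 0],
    [0, 0, 0, 0, 0, 0, 0, 0, 0, 0, 0, 0, 0, 0, 0, 0, 0, 0, 0],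
    [2, 0, 2, 2, 2, 4, 4, 2, 4, 4, 2, 4, 4, 4, 6, 6, 4, 6, 6],
    [-1, 0, -1, -1, -1, -2, -2, -1, -2, -2, -1, -2, -2, -2, -3, -3, -2, -3, -3],
    [1, 0, 1, 1, 1, 2, 2, 1, 2, 2, 1, 2, 2, 2, 3, 3, 2, 3, 3],
    [0, 0, 0, 0, 0, 0, 0, 0, 0, 0, 0, 0, 0, 0, 0, 0, 0, 0, 0],
    [1, 0, 1, 1, 1, 2, 2, 1, 2, 2, 1, 2, 2, 2, 3, 3, 2, 3, 3],
    [1, 0, 1, 1, 1, 2, 2, 1, 2, 2, 1, 2, 2, 2, 3, 3, 2, 3, 3],
    [-2, 0, -2, -2, -2, -4, -4, -2, -4, -4, -2, -4, -4, -4, -6, -6, -4, -6, -6],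
    [1, 0, 1, 1, 1, 2, 2, 1, 2, 2, 1, 2, 2, 2, 3, 3, 2, 3, 3],
    [-1, 0, -1, -1, -1, -2, -2, -1, -2, -2, -1, -2, -2, -2, -3, -3, -2, -3, -3],
    [-1, 0, -1, -1, -1, -2, -2, -1, -2, -2, -1, -2, -2, -2, -3, -3, -2, -3, -3],
    [-1, 0, -1, -1, -1, -2, -2, -1, -2, -2, -1, -2, -2, -2, -3, -3, -2, -3, -3],
    [1, 0, 1, 1, 1, 2, 2, 1, 2, 2, 1, 2, 2, 2, 3, 3, 2, 3, 3],
    [0, 0, 0, 0, 0, 0, 0, 0, 0, 0, 0, 0, 0, 0, 0, 0, 0, 0, 0],
    [1, 0, 1, 1, 1, 2, 2, 1, 2, 2, 1, 2, 2, 2, 3, 3, 2, 3, 3]]"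

lemma k332_certificate_valid:
  "list_all2 (\<lambda>(i, j) bs.
      lincomb 46 (map (\<lambda>cy. cyclic_flow cy i j) k332_cycles) k332_coefficients
        = lincomb 46 (1 # bs) (coord_form k332_edges (i, j) # k332_relations))
     k332_edges k332_certificate"
  by code_simp

lemma k332_dimensions:
  "length k332_coefficients = length k332_cycles" "\<forall>u\<in>set k332_coefficients. length u = 46"
  "length k332_edges = 45"
  by code_simp+

lemma k332_relations_vanish:
  fixes F :: "nat \<Rightarrow> nat \<Rightarrow> int"
  assumes anti: "\<And>i j. k332_adj i j \<Longrightarrow> F j i = - F i j"
    and conservation: "\<And>i. (\<Sum>j | k332_adj i j. F i j) = 0"
    and half_sum: "(\<Sum>(i, j) | k332_adj i j \<and> i < j. F i j) = 2 * k"
    and r: "r \<in> set k332_relations"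
  shows "dot r (edge_coords k332_edges F k) = 0"
proof -
  have "dot (parity_form k332_edges) (edge_coords k332_edges F k) = 0"
    using half_sum by (simp add: dot_parity_form distinct_k332_edges set_k332_edges)
  moreover have "dot (vertex_form k332_edges v) (edge_coords k332_edges F k) = 0" for v
    using sum_oriented_edges_at[OF finite_k332_adj k332_adj_sym k332_adj_irrefl anti, where v = v]
      conservation
    by (simp add: dot_vertex_form distinct_k332_edges set_k332_edges)
  ultimately show ?thesis
    using r by (auto simp: k332_relations_def)
qed

lemma k332_coord_form_eq_cycle_combination:
  assumes relations: "\<forall>r\<in>set k332_relations. dot r x = 0" and ij: "(i, j) \<in> set k332_edges"
  shows "dot (coord_form k332_edges (i, j)) x
    = (\<Sum>m<length k332_cycles. dot (k332_coefficients ! m) x * cyclic_flow (k332_cycles ! m) i j)"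
proof -
  obtain p where p: "p < length k332_edges" "k332_edges ! p = (i, j)"
    using ij by (meson in_set_conv_nth)
  let ?a = "map (\<lambda>cy. cyclic_flow cy i j) k332_cycles"
  let ?bs = "k332_certificate ! p"
  have cert: "lincomb 46 ?a k332_coefficients
      = lincomb 46 (1 # ?bs) (coord_form k332_edges (i, j) # k332_relations)"
    using list_all2_nthD[OF k332_certificate_valid p(1)] p(2) by simp
  have lengths: "\<forall>u\<in>set (coord_form k332_edges (i, j) # k332_relations). length u = 46"
    by (auto simp: coord_form_def k332_relations_def parity_form_def vertex_form_def k332_dimensions)
  have "sum_list (map2 (\<lambda>b r. b * dot r x) bs rs) = 0" if "set rs \<subseteq> set k332_relations" for bs rs
    using that relations by (induction bs rs rule: list_induct2') auto
  then have "dot (coord_form k332_edges (i, j)) x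
      = dot (lincomb 46 (1 # ?bs) (coord_form k332_edges (i, j) # k332_relations)) x"
    unfolding dot_lincomb[OF lengths] by simp
  also have "\<dots> = dot (lincomb 46 ?a k332_coefficients) x"
    by (simp only: cert)
  also have "\<dots> = (\<Sum>m<length k332_cycles. dot (k332_coefficients ! m) x * cyclic_flow (k332_cycles ! m) i j)"
    unfolding dot_lincomb[OF k332_dimensions(2)]
    by (simp add: k332_dimensions(1) sum_list_map2_nth mult.commute)
  finally show ?thesis .
qed

lemma k332_flow_lattice:
  fixes F :: "nat \<Rightarrow> nat \<Rightarrow> int"
  assumes anti: "\<And>i j. k332_adj i j \<Longrightarrow> F j i = - F i j"
    and conservation: "\<And>i. (\<Sum>j | k332_adj i j. F i j) = 0"
    and even: "even (\<Sum>(i, j) | k332_adj i j \<and> i < j. F i j)"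
  shows "\<exists>c. \<forall>i j. k332_adj i j \<longrightarrow>
    F i j = (\<Sum>m<length k332_cycles. c m * cyclic_flow (k332_cycles ! m) i j)"
proof -
  obtain k where k: "(\<Sum>(i, j) | k332_adj i j \<and> i < j. F i j) = 2 * k"
    using even by (auto elim: evenE)
  define x where "x = edge_coords k332_edges F k"
  define c where "c m = dot (k332_coefficients ! m) x" for m
  have on_edges: "F i j = (\<Sum>m<length k332_cycles. c m * cyclic_flow (k332_cycles ! m) i j)"
    if ij: "(i, j) \<in> set k332_edges" for i j
    using k332_coord_form_eq_cycle_combination[OF _ ij, of x]
      k332_relations_vanish[OF anti conservation k] ij
    by (simp add: x_def c_def dot_coord_form distinct_k332_edges)
  have "F i j = (\<Sum>m<length k332_cycles. c m * cyclic_flow (k332_cycles ! m) i j)"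
    if adj: "k332_adj i j" for i j
  proof (cases "i < j")
    case True
    then show ?thesis using adj on_edges by (simp add: set_k332_edges)
  next
    case False
    then have "j < i" using adj k332_adj_irrefl by (metis linorder_neqE_nat)
    then have "F j i = (\<Sum>m<length k332_cycles. c m * cyclic_flow (k332_cycles ! m) j i)"
      using k332_adj_sym[OF adj] on_edges by (simp add: set_k332_edges)
    moreover have "cyclic_flow (k332_cycles ! m) i j = - cyclic_flow (k332_cycles ! m) j i"
      if "m < length k332_cycles" for m
      using k332_cycles_hamiltonian that
      by (intro cyclic_flow_antisym) (simp_all add: hamiltonian_cycle_on_def)
    then have "(\<Sum>m<length k332_cycles. c m * cyclic_flow (k332_cycles ! m) i j)
        = - (\<Sum>m<length k332_cycles. c m * cyclic_flow (k332_cycles ! m) j i)"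
      unfolding sum_negf[symmetric] by (intro sum.cong refl) simp
    ultimately show ?thesis
      using anti[OF adj] by simp
  qed
  then show ?thesis by blast
qed

theorem corollary10p6:
  fixes S :: "'a::{ab_group_add,finite} set"
  assumes "0 \<notin> S"
    and "\<forall>s\<in>S. - s \<in> S"
    and "graph_iso (cayley_graph S)
           (cart_prod_graph (cart_prod_graph (complete_graph 3) (complete_graph 3)) (complete_graph 2))"
  shows "H_flows S = E_flows S"
proof -
  obtain label where label: "bij_betw label UNIV {..<18}"
    and adj: "\<forall>x y. k332_adj (label x) (label y) \<longleftrightarrow> y - x \<in> S"
    using k332_labelling[OF assms(3)] by blast
  interpret cayley_labelling S label 18 k332_adj
    using label adj assms(1,2) by unfold_locales (auto simp: k332_adj_def)
  have "even (card (UNIV :: 'a set))"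
    using bij_betw_same_card[OF label] by simp
  then have "H_flows S \<subseteq> E_flows S"
    using assms(2) by (rule H_flows_subset_E_flows)
  moreover have "E_flows S \<subseteq> H_flows S"
    using k332_cycles_hamiltonian k332_flow_lattice by (rule E_flows_subset_H_flows)
  ultimately show ?thesis by blast
qed

end
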